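(* Every graph $G$ contains a bipartite subgraph $H$ such that $$\kappa(H) \ge \max\{d(G)/4,\ (\chi(G)-1)/8\}.$$
   Context: Graphs are finite and simple; $\kappa$ is vertex connectivity, $\chi$ chromatic number, and $d(G)=|E(G)|/|V(G)|$ the density of a non-null graph $G$. *)

theory Defs
  imports Complex_Main
begin

definition graph :: "'a set \<Rightarrow> 'a set set \<Rightarrow> bool" where
  "graph V E \<longleftrightarrow> finite V \<and> (\<forall>e\<in>E. card e = 2 \<and> e \<subseteq> V)"

definition subgraph :: "'a set \<Rightarrow> 'a set set \<Rightarrow> 'a set \<Rightarrow> 'a set set \<Rightarrow> bool" where
  "subgraph V' E' V E \<longleftrightarrow> graph V' E' \<and> V' \<subseteq> V \<and> E' \<subseteq> E"

definition adj :: "'a set \<Rightarrow> 'a set set \<Rightarrow> 'a \<Rightarrow> 'a \<Rightarrow> bool" where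
  "adj V E x y \<longleftrightarrow> x \<in> V \<and> y \<in> V \<and> {x, y} \<in> E"

definition connected :: "'a set \<Rightarrow> 'a set set \<Rightarrow> bool" where
  "connected V E \<longleftrightarrow> V \<noteq> {} \<and> (\<forall>u\<in>V. \<forall>v\<in>V. (adj V E)\<^sup>*\<^sup>* u v)"

definition delete_vertices :: "'a set \<Rightarrow> 'a set set \<Rightarrow> 'a set \<Rightarrow> 'a set set" where
  "delete_vertices V E X = {e \<in> E. e \<subseteq> V - X}"

definition k_connected :: "'a set \<Rightarrow> 'a set set \<Rightarrow> nat \<Rightarrow> bool" where
  "k_connected V E k \<longleftrightarrow> k < card V \<and>
     (\<forall>X. X \<subseteq> V \<and> card X < k \<longrightarrow> connected (V - X) (delete_vertices V E X))"

text \<open>Vertex connectivity: greatest k such that G is k-connected (0 if none).\<close>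
definition kappa :: "'a set \<Rightarrow> 'a set set \<Rightarrow> nat" where
  "kappa V E = Sup {k. k_connected V E k}"

definition proper_colouring :: "'a set \<Rightarrow> 'a set set \<Rightarrow> nat \<Rightarrow> ('a \<Rightarrow> nat) \<Rightarrow> bool" where
  "proper_colouring V E k c \<longleftrightarrow> c ` V \<subseteq> {..<k} \<and> (\<forall>u v. {u, v} \<in> E \<and> u \<noteq> v \<longrightarrow> c u \<noteq> c v)"

definition chi :: "'a set \<Rightarrow> 'a set set \<Rightarrow> nat" where
  "chi V E = (LEAST k. \<exists>c. proper_colouring V E k c)"

definition bipartite :: "'a set \<Rightarrow> 'a set set \<Rightarrow> bool" where
  "bipartite V E \<longleftrightarrow> (\<exists>A B. A \<inter> B = {} \<and> A \<union> B = V \<and>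
      (\<forall>e\<in>E. card (e \<inter> A) = 1 \<and> card (e \<inter> B) = 1))"

definition density :: "'a set \<Rightarrow> 'a set set \<Rightarrow> real" where
  "density V E = real (card E) / real (card V)"

end

(* A maximum cut of G is a bipartite spanning subgraph with at least half of the edges, because
   moving a single vertex to the other side cannot enlarge the cut.  Mader's theorem (a graph
   with at least 2k|V| edges has a (k+1)-connected subgraph), applied to the cut with
   k = floor (d(G)/4), gives the bound d(G)/4.  For the chromatic bound, deleting a vertex of
   degree less than chi - 1 does not lower chi; repeating this ends in an induced subgraph S of
   minimum degree at least chi(G) - 1, so d(S) >= (chi(G) - 1)/2, and the first bound applied
   to S gives (chi(G) - 1)/8. *)

theory Submission
  imports Defs
begin

definition degree :: "'a set set \<Rightarrow> 'a \<Rightarrow> nat" where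
  "degree E v = card {e\<in>E. v \<in> e}"

definition induced_edges :: "'a set set \<Rightarrow> 'a set \<Rightarrow> 'a set set" where
  "induced_edges E U = {e\<in>E. e \<subseteq> U}"

lemma graph_finite_edges: "graph V E \<Longrightarrow> finite E"
  unfolding graph_def by (meson Pow_iff finite_Pow_iff finite_subset subsetI)

lemma graph_subset_edges: "graph V E \<Longrightarrow> F \<subseteq> E \<Longrightarrow> graph V F"
  unfolding graph_def by blast

lemma graph_induced: "graph V E \<Longrightarrow> U \<subseteq> V \<Longrightarrow> graph U (induced_edges E U)"
  unfolding graph_def induced_edges_def by (auto intro: finite_subset)

lemma subgraph_induced: "graph V E \<Longrightarrow> U \<subseteq> V \<Longrightarrow> subgraph U (induced_edges E U) V E"
  unfolding subgraph_def using graph_induced by (auto simp: induced_edges_def)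

lemma subgraph_trans: "subgraph W F V E \<Longrightarrow> subgraph V E V0 E0 \<Longrightarrow> subgraph W F V0 E0"
  unfolding subgraph_def by blast

lemma induced_edges_induced_edges:
  "U \<subseteq> U' \<Longrightarrow> induced_edges (induced_edges E U') U = induced_edges E U"
  unfolding induced_edges_def by blast

lemma induced_edges_delete_vertex:
  "graph V E \<Longrightarrow> induced_edges E (V - {v}) = {e\<in>E. v \<notin> e}"
  unfolding graph_def induced_edges_def by blast

lemma sum_degree:
  assumes "graph V E"
  shows "(\<Sum>v\<in>V. degree E v) = 2 * card E"
proof -
  have fin: "finite V" "finite E" using assms graph_finite_edges unfolding graph_def by auto
  have "(\<Sum>v\<in>V. degree E v) = (\<Sum>v\<in>V. \<Sum>e\<in>E. if v \<in> e then 1 else 0)"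
    unfolding degree_def using fin by (simp add: sum.If_cases Int_def)
  also have "\<dots> = (\<Sum>e\<in>E. \<Sum>v\<in>V. if v \<in> e then 1 else 0)"
    by (rule sum.swap)
  also have "\<dots> = (\<Sum>e\<in>E. 2)"
  proof (rule sum.cong)
    fix e assume "e \<in> E"
    then have "e \<subseteq> V" "card e = 2" using assms unfolding graph_def by auto
    then show "(\<Sum>v\<in>V. if v \<in> e then 1 else 0) = (2::nat)"
      using fin by (simp add: sum.If_cases Int_absorb1)
  qed simp
  finally show ?thesis by simp
qed

lemma card_edges_le:
  assumes "graph V E"
  shows "2 * card E \<le> card V * (card V - 1)"
proof -
  have fin: "finite V" using assms unfolding graph_def by blast
  have "E \<subseteq> {B. B \<subseteq> V \<and> card B = 2}" using assms unfolding graph_def by blast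
  then have "card E \<le> card {B. B \<subseteq> V \<and> card B = 2}"
    using fin by (intro card_mono) auto
  also have "\<dots> = card V choose 2" using fin by (rule n_subsets)
  finally show ?thesis by (simp add: choose_two)
qed

lemma card_edges_delete_vertex:
  "finite E \<Longrightarrow> card E = card {e\<in>E. v \<notin> e} + degree E v"
  unfolding degree_def by (subst card_Un_disjoint[symmetric]) (auto intro: arg_cong[where f = card])

lemma degree_le:
  assumes "graph V E" and "v \<in> V"
  shows "degree E v \<le> card V - 1"
proof -
  have fin: "finite V" using assms unfolding graph_def by blast
  have "{e\<in>E. v \<in> e} \<subseteq> (\<lambda>x. {v, x}) ` (V - {v})"
  proof
    fix e assume e: "e \<in> {e\<in>E. v \<in> e}"
    then have "card e = 2" "e \<subseteq> V" "v \<in> e" using assms unfolding graph_def by auto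
    then show "e \<in> (\<lambda>x. {v, x}) ` (V - {v})" by (auto simp: card_2_iff)
  qed
  then have "degree E v \<le> card ((\<lambda>x. {v, x}) ` (V - {v}))"
    unfolding degree_def using fin by (simp add: card_mono)
  also have "\<dots> \<le> card (V - {v})" using fin by (intro card_image_le) auto
  finally show ?thesis using assms(2) fin by simp
qed

definition cut_edges :: "'a set set \<Rightarrow> 'a set \<Rightarrow> 'a set set" where
  "cut_edges E A = {e\<in>E. card (e \<inter> A) = 1}"

lemma card_doubleton_Int_eq_1:
  assumes "x \<noteq> y"
  shows "card ({x, y} \<inter> A) = 1 \<longleftrightarrow> (x \<in> A \<longleftrightarrow> y \<notin> A)"
  using assms by (cases "x \<in> A"; cases "y \<in> A") (auto simp: Int_insert_left)

lemma bipartite_cut_edges: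
  assumes "graph V E" and "A \<subseteq> V"
  shows "bipartite V (cut_edges E A)"
  unfolding bipartite_def
proof (intro exI conjI ballI)
  show "A \<inter> (V - A) = {}" "A \<union> (V - A) = V" using assms(2) by auto
  fix e assume e: "e \<in> cut_edges E A"
  then show "card (e \<inter> A) = 1" unfolding cut_edges_def by simp
  obtain x y where "e = {x, y}" "x \<noteq> y" "e \<subseteq> V"
    using e assms(1) unfolding cut_edges_def graph_def by (auto simp: card_2_iff)
  with \<open>card (e \<inter> A) = 1\<close> show "card (e \<inter> (V - A)) = 1"
    using card_doubleton_Int_eq_1[of x y A] card_doubleton_Int_eq_1[of x y "V - A"] by auto
qed

lemma cut_edges_move_vertex:
  assumes "graph V E"
  shows "cut_edges E ((A - {v}) \<union> ({v} - A))
    = (cut_edges E A - {e\<in>E. v \<in> e}) \<union> ({e\<in>E. v \<in> e} - cut_edges E A)"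
proof -
  have "e \<in> cut_edges E ((A - {v}) \<union> ({v} - A))
    \<longleftrightarrow> (v \<in> e \<longleftrightarrow> e \<notin> cut_edges E A)" if "e \<in> E" for e
  proof -
    obtain x y where "e = {x, y}" "x \<noteq> y"
      using \<open>e \<in> E\<close> assms unfolding graph_def by (auto simp: card_2_iff)
    then show ?thesis
      using \<open>e \<in> E\<close> card_doubleton_Int_eq_1[of x y A]
        card_doubleton_Int_eq_1[of x y "(A - {v}) \<union> ({v} - A)"]
      unfolding cut_edges_def by auto
  qed
  then show ?thesis unfolding cut_edges_def by blast
qed

lemma degree_le_twice_cut_degree:
  assumes G: "graph V E" and "A \<subseteq> V" and "v \<in> V"
    and max: "\<And>B. B \<subseteq> V \<Longrightarrow> card (cut_edges E B) \<le> card (cut_edges E A)"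
  shows "degree E v \<le> 2 * degree (cut_edges E A) v"
proof -
  define C where "C = cut_edges E A"
  define Ev where "Ev = {e\<in>E. v \<in> e}"
  have fin: "finite C" "finite Ev"
    using graph_finite_edges[OF G] unfolding C_def Ev_def cut_edges_def by auto
  have "card (C - Ev) + card (Ev - C) = card (cut_edges E ((A - {v}) \<union> ({v} - A)))"
    unfolding cut_edges_move_vertex[OF G] C_def[symmetric] Ev_def[symmetric]
    using fin by (intro card_Un_disjoint[symmetric]) auto
  also have "\<dots> \<le> card C" unfolding C_def using assms(2,3) by (intro max) auto
  also have "\<dots> = card (C - Ev) + card (C \<inter> Ev)"
    using fin(1) card_Int_Diff[of C Ev] by simp
  finally have "card (Ev - C) \<le> card (C \<inter> Ev)" by simp
  moreover have "card Ev = card (Ev - C) + card (C \<inter> Ev)"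
    using fin(2) card_Int_Diff[of Ev C] by (simp add: Int_commute)
  moreover have "{e\<in>C. v \<in> e} = C \<inter> Ev"
    unfolding C_def Ev_def cut_edges_def by blast
  ultimately show ?thesis unfolding degree_def Ev_def[symmetric] C_def[symmetric] by simp
qed

lemma exists_cut_half:
  assumes G: "graph V E"
  obtains A where "A \<subseteq> V" and "card E \<le> 2 * card (cut_edges E A)"
proof -
  have "\<forall>B. B \<subseteq> V \<longrightarrow> card (cut_edges E B) < Suc (card E)"
    using graph_finite_edges[OF G] unfolding cut_edges_def by (simp add: card_mono le_imp_less_Suc)
  from ex_has_greatest_nat[OF _ this, of "{}"] obtain A where A: "A \<subseteq> V"
    and max: "\<And>B. B \<subseteq> V \<Longrightarrow> card (cut_edges E B) \<le> card (cut_edges E A)" by blast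
  have G': "graph V (cut_edges E A)"
    using G by (rule graph_subset_edges) (auto simp: cut_edges_def)
  have "2 * card E = (\<Sum>v\<in>V. degree E v)" using sum_degree[OF G] by simp
  also have "\<dots> \<le> (\<Sum>v\<in>V. 2 * degree (cut_edges E A) v)"
    using degree_le_twice_cut_degree[OF G A _ max] by (intro sum_mono) simp
  also have "\<dots> = 2 * (2 * card (cut_edges E A))"
    using sum_degree[OF G'] by (simp add: sum_distrib_left[symmetric])
  finally show ?thesis using A that by simp
qed

lemma disconnected_separation:
  assumes G: "graph W F" and "X \<subseteq> W" and "W - X \<noteq> {}"
    and "\<not> connected (W - X) (delete_vertices W F X)"
  obtains U1 U2 where "U1 \<union> U2 = W" and "U1 \<inter> U2 = X" and "U1 - U2 \<noteq> {}" and "U2 - U1 \<noteq> {}"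
    and "\<And>e. e \<in> F \<Longrightarrow> e \<subseteq> U1 \<or> e \<subseteq> U2"
proof -
  define R where "R = (adj (W - X) (delete_vertices W F X))\<^sup>*\<^sup>*"
  obtain u w where u: "u \<in> W - X" and w: "w \<in> W - X" and "\<not> R u w"
    using assms(3,4) unfolding connected_def R_def by blast
  define C where "C = {y \<in> W - X. R u y}"
  have "u \<in> C" "w \<notin> C" using u \<open>\<not> R u w\<close> unfolding C_def R_def by auto
  have split: "e \<subseteq> C \<union> X \<or> e \<subseteq> W - C" if "e \<in> F" for e
  proof (rule ccontr)
    assume "\<not> ?thesis"
    moreover have "card e = 2" "e \<subseteq> W" using that G unfolding graph_def by auto
    ultimately obtain a b where "a \<in> e" "a \<in> C" "b \<in> e" "b \<in> W - X - C"
      by blast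
    with \<open>card e = 2\<close> have "e = {a, b}" by (auto simp: card_2_iff)
    then have "adj (W - X) (delete_vertices W F X) a b"
      using that \<open>a \<in> C\<close> \<open>b \<in> W - X - C\<close>
      unfolding adj_def delete_vertices_def C_def by auto
    then have "R u b"
      using \<open>a \<in> C\<close> unfolding C_def R_def by (auto intro: rtranclp.rtrancl_into_rtrancl)
    with \<open>b \<in> W - X - C\<close> show False unfolding C_def by blast
  qed
  show thesis
  proof (rule that[of "C \<union> X" "W - C"])
    show "(C \<union> X) \<union> (W - C) = W" "(C \<union> X) \<inter> (W - C) = X"
      using \<open>X \<subseteq> W\<close> unfolding C_def by auto
    show "(C \<union> X) - (W - C) \<noteq> {}" "(W - C) - (C \<union> X) \<noteq> {}"
      using \<open>u \<in> C\<close> \<open>w \<notin> C\<close> u w by auto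
  qed (fact split)
qed

definition mader_dense :: "nat \<Rightarrow> 'a set \<Rightarrow> 'a set set \<Rightarrow> bool" where
  "mader_dense k V E \<longleftrightarrow> 2 * k \<le> card V \<and> 2 * k * (card V - k) < card E"

lemma mader_dense_if_density:
  assumes G: "graph V E" and "E \<noteq> {}" and dense: "2 * k * card V \<le> card E"
  shows "mader_dense k V E"
proof -
  have "0 < card E" using \<open>E \<noteq> {}\<close> graph_finite_edges[OF G] by auto
  have "2 * card E \<le> card V * card V"
    using card_edges_le[OF G] by (meson diff_le_self le_trans mult_le_mono2)
  then have "0 < card V" using \<open>0 < card E\<close> by (cases "card V") auto
  have "2 * k * card V \<le> card V * card V" using dense \<open>2 * card E \<le> card V * card V\<close> by linarith
  with \<open>0 < card V\<close> have "2 * k \<le> card V" by simp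
  moreover have "2 * k * (card V - k) < card E"
  proof (cases "k = 0")
    case False
    then have "2 * k * (card V - k) < 2 * k * card V" using \<open>0 < card V\<close> by simp
    then show ?thesis using dense by linarith
  qed (use \<open>0 < card E\<close> in simp)
  ultimately show ?thesis unfolding mader_dense_def ..
qed

text \<open>The minimal subgraph \<open>H\<close> in Diestel's proof of Mader's theorem (Graph Theory,
  Thm. 1.4.3), with \<open>\<gamma> = 2k\<close>.\<close>
locale mader_minimal =
  fixes W :: "'a set" and F :: "'a set set" and k :: nat
  assumes graph: "graph W F"
    and dense: "mader_dense k W F"
    and minimal: "\<And>U. U \<subset> W \<Longrightarrow> \<not> mader_dense k U (induced_edges F U)"
begin

lemma card_ge: "2 * k \<le> card W"
  using dense unfolding mader_dense_def by simp

lemma many_edges: "2 * k * (card W - k) < card F"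
  using dense unfolding mader_dense_def by simp

lemma proper_sparse:
  assumes "U \<subset> W" and "2 * k \<le> card U"
  shows "card (induced_edges F U) \<le> 2 * k * (card U - k)"
  using minimal[OF assms(1)] assms(2) unfolding mader_dense_def by simp

lemma finite_W: "finite W"
  using graph unfolding graph_def by blast

lemma card_gt: "2 * k < card W"
proof (rule ccontr)
  assume "\<not> ?thesis"
  then have "card W = 2 * k" using card_ge by simp
  then have "2 * card F \<le> 2 * k * (2 * k - 1)" and "2 * k * k < card F"
    using card_edges_le[OF graph] many_edges by auto
  moreover have "2 * k * (2 * k - 1) \<le> 2 * k * (2 * k)" by simp
  ultimately show False by (simp add: algebra_simps)
qed

lemma degree_gt:
  assumes "v \<in> W"
  shows "2 * k < degree F v"
proof (rule ccontr)
  assume small: "\<not> 2 * k < degree F v"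
  let ?U = "W - {v}"
  have card_U: "card ?U = card W - 1" using assms finite_W by simp
  have "card (induced_edges F ?U) \<le> 2 * k * (card ?U - k)"
    using assms card_U card_gt by (intro proper_sparse) auto
  then have "card (induced_edges F ?U) + degree F v \<le> 2 * k * (card W - 1 - k) + 2 * k"
    using small unfolding card_U by linarith
  also have "\<dots> = 2 * k * (card W - 1 - k + 1)" by (simp only: add_mult_distrib2 mult_1_right)
  also have "card W - 1 - k + 1 = card W - k" using card_gt by linarith
  also have "card (induced_edges F ?U) + degree F v = card F"
    using card_edges_delete_vertex[OF graph_finite_edges[OF graph]]
    by (simp add: induced_edges_delete_vertex[OF graph])
  finally show False using many_edges by simp
qed

lemma closed_part_card_gt:
  assumes "U \<subseteq> W" and "y \<in> U" and "\<And>e. e \<in> F \<Longrightarrow> y \<in> e \<Longrightarrow> e \<subseteq> U"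
  shows "2 * k < card U - 1"
proof -
  have "2 * k < degree F y" using assms(1,2) by (intro degree_gt) auto
  also have "degree F y = degree (induced_edges F U) y"
    unfolding degree_def induced_edges_def using assms(3) by (intro arg_cong[where f = card]) blast
  also have "\<dots> \<le> card U - 1"
    using assms(1,2) by (intro degree_le graph_induced[OF graph])
  finally show ?thesis .
qed

lemma separation_part_sparse:
  assumes "U1 \<union> U2 = W" and "u \<in> U1 - U2" and "U2 - U1 \<noteq> {}"
    and split: "\<And>e. e \<in> F \<Longrightarrow> e \<subseteq> U1 \<or> e \<subseteq> U2"
  shows "2 * k < card U1 - 1" and "card (induced_edges F U1) \<le> 2 * k * (card U1 - k)"
proof -
  have "U1 \<subseteq> W" "U1 \<noteq> W" using assms(1,3) by auto
  have "e \<subseteq> U1" if "e \<in> F" "u \<in> e" for e using split[OF that(1)] that(2) assms(2) by blast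
  then show "2 * k < card U1 - 1"
    using closed_part_card_gt[OF \<open>U1 \<subseteq> W\<close>] assms(2) by blast
  then show "card (induced_edges F U1) \<le> 2 * k * (card U1 - k)"
    using \<open>U1 \<subseteq> W\<close> \<open>U1 \<noteq> W\<close> by (intro proper_sparse) auto
qed

lemma separator_card_gt:
  assumes U: "U1 \<union> U2 = W" and "U1 - U2 \<noteq> {}" and "U2 - U1 \<noteq> {}"
    and split: "\<And>e. e \<in> F \<Longrightarrow> e \<subseteq> U1 \<or> e \<subseteq> U2"
  shows "k < card (U1 \<inter> U2)"
proof (rule ccontr)
  assume small: "\<not> k < card (U1 \<inter> U2)"
  obtain u w where u: "u \<in> U1 - U2" and w: "w \<in> U2 - U1" using assms(2,3) by blast
  note part1 = separation_part_sparse[OF U u assms(3) split]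
  have U': "U2 \<union> U1 = W" using U by auto
  have split': "e \<subseteq> U2 \<or> e \<subseteq> U1" if "e \<in> F" for e using split[OF that] by blast
  note part2 = separation_part_sparse[OF U' w assms(2) split']
  have "card U1 + card U2 = card W + card (U1 \<inter> U2)"
    using card_Un_Int[of U1 U2] U finite_W by (metis finite_Un)
  have "F = induced_edges F U1 \<union> induced_edges F U2"
    using split unfolding induced_edges_def by blast
  then have "card F \<le> card (induced_edges F U1) + card (induced_edges F U2)"
    by (metis card_Un_le)
  also have "\<dots> \<le> 2 * k * ((card U1 - k) + (card U2 - k))"
    using part1(2) part2(2) by (simp add: add_mult_distrib2)
  also have "\<dots> \<le> 2 * k * (card W - k)"
    using \<open>card U1 + card U2 = card W + card (U1 \<inter> U2)\<close> small part1(1) part2(1)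
    by (intro mult_le_mono2) linarith
  finally show False using many_edges by simp
qed

lemma k_connected: "k_connected W F (Suc k)"
  unfolding k_connected_def
proof (intro conjI allI impI)
  obtain v where "v \<in> W" using card_gt by fastforce
  then show "Suc k < card W"
    using closed_part_card_gt[of W v] graph unfolding graph_def by auto
  fix X assume "X \<subseteq> W \<and> card X < Suc k"
  then have X: "X \<subseteq> W" "card X \<le> k" by auto
  show "connected (W - X) (delete_vertices W F X)"
  proof (rule ccontr)
    assume "\<not> ?thesis"
    moreover have "W - X \<noteq> {}" using X card_gt by auto
    ultimately obtain U1 U2 where U: "U1 \<union> U2 = W" and sep: "U1 \<inter> U2 = X"
      and sides: "U1 - U2 \<noteq> {}" "U2 - U1 \<noteq> {}"
      and split: "\<And>e. e \<in> F \<Longrightarrow> e \<subseteq> U1 \<or> e \<subseteq> U2"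
      using disconnected_separation[OF graph X(1)] by blast
    have "k < card (U1 \<inter> U2)" using separator_card_gt[OF U sides split] .
    with X(2) show False unfolding sep by simp
  qed
qed

end

theorem exists_k_connected_subgraph:
  assumes G: "graph V E" and "E \<noteq> {}" and "2 * k * card V \<le> card E"
  obtains W F where "subgraph W F V E" and "k_connected W F (Suc k)"
proof -
  define P where "P U \<longleftrightarrow> U \<subseteq> V \<and> mader_dense k U (induced_edges E U)" for U
  have "induced_edges E V = E" using G unfolding graph_def induced_edges_def by blast
  then have "P V" unfolding P_def using mader_dense_if_density[OF assms] by simp
  then obtain U where "P U" and min: "\<And>U'. P U' \<Longrightarrow> card U \<le> card U'"
    using ex_has_least_nat[of P V card] by blast
  then have "U \<subseteq> V" unfolding P_def by blast
  interpret mader_minimal U "induced_edges E U" k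
  proof
    show "graph U (induced_edges E U)" using graph_induced[OF G \<open>U \<subseteq> V\<close>] .
    show "mader_dense k U (induced_edges E U)" using \<open>P U\<close> unfolding P_def by blast
    fix U' assume "U' \<subset> U"
    then have "card U' < card U"
      using \<open>U \<subseteq> V\<close> G unfolding graph_def by (meson psubset_card_mono finite_subset)
    then have "\<not> P U'" using min by (meson leD)
    then show "\<not> mader_dense k U' (induced_edges (induced_edges E U) U')"
      using \<open>U' \<subset> U\<close> \<open>U \<subseteq> V\<close> unfolding P_def by (simp add: induced_edges_induced_edges)
  qed
  show thesis using that subgraph_induced[OF G \<open>U \<subseteq> V\<close>] k_connected by blast
qed

lemma ex_proper_colouring_card:
  assumes "graph V E"
  shows "\<exists>c. proper_colouring V E (card V) c"
proof -
  obtain c where c: "bij_betw c V {0..<card V}"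
    using ex_bij_betw_finite_nat[of V] assms unfolding graph_def by blast
  have "c u \<noteq> c v" if "{u, v} \<in> E" "u \<noteq> v" for u v
    using that assms c unfolding graph_def bij_betw_def inj_on_def by (metis insert_subset)
  then have "proper_colouring V E (card V) c"
    using c unfolding proper_colouring_def bij_betw_def by auto
  then show ?thesis by blast
qed

lemma chi_le: "proper_colouring V E k c \<Longrightarrow> chi V E \<le> k"
  unfolding chi_def by (rule Least_le) blast

lemma chi_le_card: "graph V E \<Longrightarrow> chi V E \<le> card V"
  using ex_proper_colouring_card by (blast intro: chi_le)

lemma ex_proper_colouring_chi:
  assumes "graph V E"
  shows "\<exists>c. proper_colouring V E (chi V E) c"
  unfolding chi_def using ex_proper_colouring_card[OF assms]
  by (rule LeastI_ex[where P = "\<lambda>k. Ex (proper_colouring V E k)", OF exI])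

lemma chi_le_delete_vertex:
  assumes G: "graph V E" and "v \<in> V"
  shows "chi V E \<le> max (chi (V - {v}) (induced_edges E (V - {v}))) (Suc (degree E v))"
proof -
  define E' where "E' = induced_edges E (V - {v})"
  define K where "K = max (chi (V - {v}) E') (Suc (degree E v))"
  obtain c where c: "proper_colouring (V - {v}) E' (chi (V - {v}) E') c"
    using ex_proper_colouring_chi graph_induced[OF G, of "V - {v}"] unfolding E'_def by blast
  define N where "N = {x. {v, x} \<in> E}"
  have "N \<subseteq> V" using G unfolding N_def graph_def by blast
  then have "finite N" using G unfolding graph_def by (auto intro: finite_subset)
  have "card N \<le> degree E v"
    unfolding degree_def N_def using graph_finite_edges[OF G]
    by (intro card_inj_on_le[where f = "\<lambda>x. {v, x}"]) (auto simp: inj_on_def doubleton_eq_iff)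
  then have "card (c ` N) < card {..<K}"
    using card_image_le[OF \<open>finite N\<close>, of c] unfolding K_def by simp
  then obtain col where col: "col < K" "col \<notin> c ` N"
    using card_mono[OF finite_imageI[OF \<open>finite N\<close>], of "{..<K}" c] by fastforce
  have "proper_colouring V E K (c(v := col))"
    unfolding proper_colouring_def
  proof (intro conjI allI impI)
    show "(c(v := col)) ` V \<subseteq> {..<K}"
      using c col unfolding proper_colouring_def K_def by force
    fix x y assume xy: "{x, y} \<in> E \<and> x \<noteq> y"
    show "(c(v := col)) x \<noteq> (c(v := col)) y"
    proof (cases "v \<in> {x, y}")
      case True
      then show ?thesis using xy col unfolding N_def by (auto simp: insert_commute)
    next
      case False
      then have "{x, y} \<in> E'" using xy G unfolding E'_def induced_edges_def graph_def by blast
      then show ?thesis using False xy c unfolding proper_colouring_def by auto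
    qed
  qed
  then show ?thesis unfolding K_def E'_def by (rule chi_le)
qed

lemma chi_minus_one_le_twice_density:
  assumes G: "graph V E" and deg: "\<And>v. v \<in> V \<Longrightarrow> chi V E \<le> Suc (degree E v)"
  shows "real (chi V E) - 1 \<le> 2 * density V E"
proof (cases "chi V E = 0")
  case False
  then have "0 < card V" using chi_le_card[OF G] by linarith
  have "card V * (chi V E - 1) = (\<Sum>v\<in>V. chi V E - 1)" by simp
  also have "\<dots> \<le> (\<Sum>v\<in>V. degree E v)" using deg by (intro sum_mono) fastforce
  also have "\<dots> = 2 * card E" by (rule sum_degree[OF G])
  finally have "real (card V * (chi V E - 1)) \<le> real (2 * card E)"
    by (rule of_nat_mono)
  then have "real (card V) * (real (chi V E) - 1) \<le> 2 * real (card E)"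
    using False by (simp add: of_nat_diff)
  then show ?thesis
    using \<open>0 < card V\<close> unfolding density_def by (simp add: pos_le_divide_eq mult.commute)
qed (simp add: density_def order.trans[OF _ divide_nonneg_nonneg])

theorem exists_induced_subgraph_chi_density:
  assumes "graph V E"
  shows "\<exists>S\<subseteq>V. real (chi V E) - 1 \<le> 2 * density S (induced_edges E S)"
  using assms
proof (induction "card V" arbitrary: V E rule: less_induct)
  case less
  show ?case
  proof (cases "\<forall>v\<in>V. chi V E \<le> Suc (degree E v)")
    case True
    moreover have "induced_edges E V = E"
      using less.prems unfolding graph_def induced_edges_def by blast
    ultimately show ?thesis using chi_minus_one_le_twice_density[OF less.prems] by auto
  next
    case False
    then obtain v where v: "v \<in> V" "Suc (degree E v) < chi V E" by auto
    let ?E' = "induced_edges E (V - {v})"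
    have "chi V E \<le> chi (V - {v}) ?E'"
      using chi_le_delete_vertex[OF less.prems v(1)] v(2) by linarith
    have "card (V - {v}) < card V"
      using v(1) less.prems unfolding graph_def by (blast intro: card_Diff1_less)
    then obtain S where S: "S \<subseteq> V - {v}"
      and chi_S: "real (chi (V - {v}) ?E') - 1 \<le> 2 * density S (induced_edges ?E' S)"
      using less.hyps[OF _ graph_induced[OF less.prems Diff_subset]] by blast
    have "induced_edges ?E' S = induced_edges E S"
      using S by (rule induced_edges_induced_edges)
    then have "real (chi V E) - 1 \<le> 2 * density S (induced_edges E S)"
      using of_nat_mono[OF \<open>chi V E \<le> chi (V - {v}) ?E'\<close>] chi_S by simp
    then show ?thesis using S by blast
  qed
qed

lemma bipartite_subgraph:
  assumes "bipartite V E" and "subgraph W F V E"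
  shows "bipartite W F"
proof -
  obtain A B where AB: "A \<inter> B = {}" "A \<union> B = V"
    "\<forall>e\<in>E. card (e \<inter> A) = 1 \<and> card (e \<inter> B) = 1"
    using assms(1) unfolding bipartite_def by blast
  have "W \<subseteq> V" "F \<subseteq> E" "\<forall>e\<in>F. e \<subseteq> W"
    using assms(2) unfolding subgraph_def graph_def by auto
  then have "e \<inter> (A \<inter> W) = e \<inter> A" "e \<inter> (B \<inter> W) = e \<inter> B" if "e \<in> F" for e
    using that by auto
  then have "\<forall>e\<in>F. card (e \<inter> (A \<inter> W)) = 1 \<and> card (e \<inter> (B \<inter> W)) = 1"
    using AB(3) \<open>F \<subseteq> E\<close> by auto
  moreover have "(A \<inter> W) \<inter> (B \<inter> W) = {}" "(A \<inter> W) \<union> (B \<inter> W) = W"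
    using AB \<open>W \<subseteq> V\<close> by auto
  ultimately show ?thesis unfolding bipartite_def by blast
qed

lemma le_kappa: "k_connected V E k \<Longrightarrow> k \<le> kappa V E"
  unfolding kappa_def
  by (rule cSup_upper) (auto simp: bdd_above_def k_connected_def intro: less_imp_le)

theorem exists_bipartite_subgraph_kappa_ge_density:
  assumes G: "graph V E"
  obtains W F where "subgraph W F V E" and "bipartite W F" and "density V E / 4 \<le> real (kappa W F)"
proof (cases "E = {}")
  case True
  have "subgraph V {} V E" "bipartite V {}"
    using G unfolding subgraph_def graph_def bipartite_def by auto
  with True show thesis using that by (simp add: density_def)
next
  case False
  obtain A where A: "A \<subseteq> V" and half: "card E \<le> 2 * card (cut_edges E A)"
    using exists_cut_half[OF G] .
  let ?C = "cut_edges E A"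
  have "graph V ?C" using G by (rule graph_subset_edges) (auto simp: cut_edges_def)
  then have "subgraph V ?C V E" unfolding subgraph_def by (auto simp: cut_edges_def)
  define k where "k = nat \<lfloor>density V E / 4\<rfloor>"
  have "0 < card V"
    using False G unfolding graph_def by (fastforce simp: card_gt_0_iff)
  have "real k \<le> density V E / 4"
    unfolding k_def density_def by simp
  then have "real (2 * k * card V) \<le> real (card E) / 2"
    using \<open>0 < card V\<close> unfolding density_def by (simp add: field_simps)
  also have "\<dots> \<le> real (card ?C)" using half by simp
  finally have "2 * k * card V \<le> card ?C" by (simp only: of_nat_le_iff)
  moreover have "?C \<noteq> {}" using half False graph_finite_edges[OF G] by auto
  ultimately obtain W F where sub: "subgraph W F V ?C" and conn: "k_connected W F (Suc k)"
    using exists_k_connected_subgraph[OF \<open>graph V ?C\<close>] by blast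
  show thesis
  proof (rule that)
    show "subgraph W F V E" using sub \<open>subgraph V ?C V E\<close> by (rule subgraph_trans)
    show "bipartite W F" using bipartite_cut_edges[OF G A] sub by (rule bipartite_subgraph)
    have "density V E / 4 < Suc k" unfolding k_def by linarith
    also have "\<dots> \<le> kappa W F" using le_kappa[OF conn] by simp
    finally show "density V E / 4 \<le> real (kappa W F)" by simp
  qed
qed

theorem corollary3p2:
  fixes V :: "'a set" and E :: "'a set set"
  assumes "graph V E" and "V \<noteq> {}"
  shows "\<exists>VH EH. subgraph VH EH V E \<and> bipartite VH EH \<and>
           real (kappa VH EH) \<ge> max (density V E / 4) ((real (chi V E) - 1) / 8)"
proof -
  obtain V1 E1 where G1: "subgraph V1 E1 V E" "bipartite V1 E1" "density V E / 4 \<le> kappa V1 E1"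
    using exists_bipartite_subgraph_kappa_ge_density[OF assms(1)] .
  obtain S where S: "S \<subseteq> V" and chi_S: "real (chi V E) - 1 \<le> 2 * density S (induced_edges E S)"
    using exists_induced_subgraph_chi_density[OF assms(1)] by blast
  obtain V2 E2 where G2: "subgraph V2 E2 S (induced_edges E S)" "bipartite V2 E2"
    "density S (induced_edges E S) / 4 \<le> kappa V2 E2"
    using exists_bipartite_subgraph_kappa_ge_density[OF graph_induced[OF assms(1) S]] .
  have "(real (chi V E) - 1) / 8 \<le> kappa V2 E2" using chi_S G2(3) by (simp add: field_simps)
  then show ?thesis
    using G1 G2(2) subgraph_trans[OF G2(1) subgraph_induced[OF assms(1) S]]
    by (cases "density V E / 4 \<le> (real (chi V E) - 1) / 8") auto
qed

end
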